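(* There is no exhaustive strategy-proof PB algorithm $G$ and constant $\alpha>\frac{2}{3}$ such that $\min_{i\in N}u_i(G(I))\ge\alpha\cdot OPT(I)$ for every PB instance $I$ in which every project has cost $1$ and every approval vote is a knapsack vote (i.e., $c(A_i)\le b$ for all $i$). Here $OPT(I)=\max_{S\subseteq P,\,c(S)\le b}\min_{i\in N}u_i(S)$.
   Context: A PB instance is $I=\langle N,P,c,b,\mathcal{A}\rangle$ with voters $N=\{1,\dots,n\}$, projects $P$, costs $c:P\to\mathbb{N}$, budget $b\in\mathbb{N}$, and approval sets $A_i\subseteq P$. $c(S)=\sum_{p\in S}c(p)$; $S$ is feasible if $c(S)\le b$; $u_i(S)=c(S\cap A_i)$. A PB algorithm $G$ maps every instance to a single feasible set $G(I)$. $G$ is strategy-proof if for every instance, every voter $i$ and every $S\subseteq P$, $c(A_i\cap G(A_i,\mathcal{A}_{-i}))\ge c(A_i\cap G(S,\mathcal{A}_{-i}))$, where $(S,\mathcal{A}_{-i})$ denotes the profile obtained by replacing $A_i$ with $S$ and keeping all other votes and $N,P,c,b$ fixed. $G$ is exhaustive if for every instance $I$ and every $p\notin G(I)$, $c(p)+c(G(I))>b$. *)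

theory Defs
  imports Complex_Main
begin

text \<open>Voters are 1..n, projects are a finite set of natural numbers
(project names are irrelevant). To avoid junk data, costs outside P are 0 and
votes of non-voters are empty (canonical representation).\<close>

record pb_inst =
  voters :: nat
  projs  :: "nat set"
  cost   :: "nat \<Rightarrow> nat"
  budget :: nat
  votes  :: "nat \<Rightarrow> nat set"

definition setcost :: "pb_inst \<Rightarrow> nat set \<Rightarrow> nat" where
  "setcost I S = (\<Sum>p\<in>S. cost I p)"

definition utility :: "pb_inst \<Rightarrow> nat \<Rightarrow> nat set \<Rightarrow> nat" where
  "utility I i S = setcost I (S \<inter> votes I i)"

definition valid_inst :: "pb_inst \<Rightarrow> bool" where
  "valid_inst I \<longleftrightarrow> voters I \<ge> 1 \<and> finite (projs I)
     \<and> (\<forall>i\<in>{1..voters I}. votes I i \<subseteq> projs I)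
     \<and> (\<forall>i. i \<notin> {1..voters I} \<longrightarrow> votes I i = {})
     \<and> (\<forall>p. p \<notin> projs I \<longrightarrow> cost I p = 0)"

definition feasible :: "pb_inst \<Rightarrow> nat set \<Rightarrow> bool" where
  "feasible I S \<longleftrightarrow> S \<subseteq> projs I \<and> setcost I S \<le> budget I"

definition pb_algorithm :: "(pb_inst \<Rightarrow> nat set) \<Rightarrow> bool" where
  "pb_algorithm G \<longleftrightarrow> (\<forall>I. valid_inst I \<longrightarrow> feasible I (G I))"

definition strategy_proof :: "(pb_inst \<Rightarrow> nat set) \<Rightarrow> bool" where
  "strategy_proof G \<longleftrightarrow>
     (\<forall>I. valid_inst I \<longrightarrow> (\<forall>i\<in>{1..voters I}. \<forall>S. S \<subseteq> projs I \<longrightarrow>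
        setcost I (votes I i \<inter> G I)
          \<ge> setcost I (votes I i \<inter> G (I\<lparr>votes := (votes I)(i := S)\<rparr>))))"

definition exhaustive :: "(pb_inst \<Rightarrow> nat set) \<Rightarrow> bool" where
  "exhaustive G \<longleftrightarrow>
     (\<forall>I. valid_inst I \<longrightarrow> (\<forall>p\<in>projs I. p \<notin> G I \<longrightarrow> cost I p + setcost I (G I) > budget I))"

definition min_util :: "pb_inst \<Rightarrow> nat set \<Rightarrow> nat" where
  "min_util I S = Min ((\<lambda>i. utility I i S) ` {1..voters I})"

definition OPT :: "pb_inst \<Rightarrow> nat" where
  "OPT I = Max ((\<lambda>S. min_util I S) ` {S. feasible I S})"

definition unit_cost :: "pb_inst \<Rightarrow> bool" where
  "unit_cost I \<longleftrightarrow> (\<forall>p\<in>projs I. cost I p = 1)"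

definition knapsack_votes :: "pb_inst \<Rightarrow> bool" where
  "knapsack_votes I \<longleftrightarrow> (\<forall>i\<in>{1..voters I}. setcost I (votes I i) \<le> budget I)"

end

theory Submission
  imports Defs
begin

text \<open>Since utilities are integers, any \<open>\<alpha> > 0\<close> already forces the algorithm to give every
voter positive utility whenever some feasible set does. Take budget 2, unit costs and the
ballots \<open>{0}\<close>, \<open>{0,1}\<close>, \<open>{0,2}\<close>. If voter 3 reports \<open>{2}\<close> instead, serving voters 1 and 3 means
funding 0 and 2, i.e. all of voter 3's true ballot; by strategy-proofness 0 and 2 must then
already be funded on the truthful profile. Symmetrically for voter 2 and project 1, so the
truthful outcome contains all three projects and exceeds the budget.\<close>

definition deviation :: "pb_inst \<Rightarrow> nat \<Rightarrow> nat set \<Rightarrow> pb_inst" where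
  "deviation I i S = I\<lparr>votes := (votes I)(i := S)\<rparr>"

lemma finite_feasible: "valid_inst I \<Longrightarrow> finite {S. feasible I S}"
  unfolding valid_inst_def feasible_def
  by (rule finite_subset[of _ "Pow (projs I)"]) auto

lemma min_util_le_utility: "i \<in> {1..voters I} \<Longrightarrow> min_util I S \<le> utility I i S"
  unfolding min_util_def by (intro Min_le) auto

lemma min_util_pos_iff:
  assumes "valid_inst I"
  shows "0 < min_util I S \<longleftrightarrow> (\<forall>i\<in>{1..voters I}. 0 < utility I i S)"
proof -
  have "{1..voters I} \<noteq> {}" using assms by (auto simp: valid_inst_def)
  then show ?thesis unfolding min_util_def by (simp add: Min_gr_iff)
qed

lemma min_util_le_OPT: "valid_inst I \<Longrightarrow> feasible I S \<Longrightarrow> min_util I S \<le> OPT I"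
  unfolding OPT_def using finite_feasible by (intro Max_ge) auto

lemma approximation_serves_all_voters:
  assumes "valid_inst I" and "0 < \<alpha>" and approx: "\<alpha> * real (OPT I) \<le> real (min_util I W)"
    and "feasible I S" and "\<forall>i\<in>{1..voters I}. 0 < utility I i S"
    and "i \<in> {1..voters I}"
  shows "0 < utility I i W"
proof -
  have "0 < OPT I"
    using assms min_util_pos_iff min_util_le_OPT by (metis order_less_le_trans)
  with \<open>0 < \<alpha>\<close> approx have "0 < min_util I W"
    by (metis mult_pos_pos of_nat_0_less_iff order_less_le_trans)
  then show ?thesis using min_util_le_utility \<open>i \<in> {1..voters I}\<close> by (metis order_less_le_trans)
qed

lemma utility_pos_imp_funded: "0 < utility I i S \<Longrightarrow> S \<inter> votes I i \<noteq> {}"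
  by (auto simp: utility_def setcost_def)

lemma setcost_unit_cost: "unit_cost I \<Longrightarrow> S \<subseteq> projs I \<Longrightarrow> setcost I S = card S"
  unfolding unit_cost_def setcost_def by (simp add: subset_iff)

lemma card_le_budget_if_feasible: "unit_cost I \<Longrightarrow> feasible I S \<Longrightarrow> card S \<le> budget I"
  unfolding feasible_def using setcost_unit_cost by metis

lemma subset_if_sum_le_sum_inter:
  fixes c :: "'a \<Rightarrow> nat"
  assumes "finite A" and "\<forall>x\<in>A. 0 < c x" and "sum c A \<le> sum c (A \<inter> B)"
  shows "A \<subseteq> B"
proof -
  have "sum c A = sum c (A \<inter> B) + sum c (A - B)"
    using \<open>finite A\<close> by (metis Diff_Int2 inf.idem sum.Int_Diff)
  with assms have "sum c (A - B) = 0" by linarith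
  with \<open>finite A\<close> have "\<forall>x\<in>A - B. c x = 0" by simp
  then show ?thesis using assms(2) by (metis DiffI less_irrefl subsetI)
qed

lemma strategy_proofD:
  assumes "strategy_proof G" "valid_inst I" "i \<in> {1..voters I}" "S \<subseteq> projs I"
  shows "setcost I (votes I i \<inter> G (deviation I i S)) \<le> setcost I (votes I i \<inter> G I)"
  using assms unfolding strategy_proof_def deviation_def by blast

lemma strategy_proof_funds_ballot:
  assumes "strategy_proof G" "valid_inst I" "unit_cost I" "i \<in> {1..voters I}" "S \<subseteq> projs I"
    and "votes I i \<subseteq> G (deviation I i S)"
  shows "votes I i \<subseteq> G I"
proof (rule subset_if_sum_le_sum_inter)
  have ballot: "votes I i \<subseteq> projs I" "finite (projs I)"
    using assms(2,4) by (auto simp: valid_inst_def)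
  then show "finite (votes I i)" by (rule finite_subset)
  show "\<forall>p\<in>votes I i. 0 < cost I p"
    using assms(3) ballot by (auto simp: unit_cost_def)
  have "setcost I (votes I i) = setcost I (votes I i \<inter> G (deviation I i S))"
    using assms(6) by (simp add: Int_absorb2)
  also have "\<dots> \<le> setcost I (votes I i \<inter> G I)"
    using strategy_proofD assms(1,2,4,5) .
  finally show "sum (cost I) (votes I i) \<le> sum (cost I) (votes I i \<inter> G I)"
    by (simp add: setcost_def)
qed

lemma valid_inst_deviation:
  "valid_inst I \<Longrightarrow> i \<in> {1..voters I} \<Longrightarrow> S \<subseteq> projs I \<Longrightarrow> valid_inst (deviation I i S)"
  by (auto simp: valid_inst_def deviation_def)

lemma unit_cost_deviation: "unit_cost (deviation I i S) = unit_cost I"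
  by (simp add: unit_cost_def deviation_def)

lemma knapsack_votes_deviation:
  "knapsack_votes I \<Longrightarrow> setcost I S \<le> budget I \<Longrightarrow> knapsack_votes (deviation I i S)"
  by (simp add: knapsack_votes_def deviation_def setcost_def)

definition counterexample_inst :: pb_inst where
  "counterexample_inst = \<lparr>voters = 3, projs = {0,1,2}, cost = (\<lambda>p. if p \<le> 2 then 1 else 0),
     budget = 2,
     votes = (\<lambda>i. if i = 1 then {0} else if i = 2 then {0,1} else if i = 3 then {0,2} else {})\<rparr>"

lemma counterexample_inst:
  "valid_inst counterexample_inst" "unit_cost counterexample_inst"
  "knapsack_votes counterexample_inst"
  by (auto simp: valid_inst_def unit_cost_def knapsack_votes_def counterexample_inst_def setcost_def)

lemma counterexample_inst_fields:
  "voters counterexample_inst = 3" "projs counterexample_inst = {0,1,2}"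
  "budget counterexample_inst = 2"
  "votes counterexample_inst 2 = {0,1}" "votes counterexample_inst 3 = {0,2}"
  by (simp_all add: counterexample_inst_def)

lemma counterexample_deviation_funds_ballot:
  assumes "0 < \<alpha>"
    and approx: "\<forall>I. valid_inst I \<and> unit_cost I \<and> knapsack_votes I \<longrightarrow>
                   \<alpha> * real (OPT I) \<le> real (min_util I (G I))"
    and i: "i \<in> {2,3}"
  defines "I' \<equiv> deviation counterexample_inst i {i - 1}"
  shows "votes counterexample_inst i \<subseteq> G I'"
proof -
  have I': "valid_inst I'" "unit_cost I'" "knapsack_votes I'"
    using i counterexample_inst unfolding I'_def
    by (auto intro!: valid_inst_deviation knapsack_votes_deviation simp: unit_cost_deviation)
      (auto simp: counterexample_inst_def setcost_def)
  have "feasible I' {0, i - 1}" and "\<forall>j\<in>{1..voters I'}. 0 < utility I' j {0, i - 1}"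
    using i by (auto simp: I'_def deviation_def counterexample_inst_def feasible_def
        utility_def setcost_def)
  then have "G I' \<inter> votes I' j \<noteq> {}" if "j \<in> {1, i}" for j
    using approximation_serves_all_voters[OF I'(1) \<open>0 < \<alpha>\<close>] approx I' that i
    by (intro utility_pos_imp_funded) (auto simp: I'_def deviation_def counterexample_inst_def)
  from this[of 1] this[of i] show ?thesis
    using i by (auto simp: I'_def deviation_def counterexample_inst_def)
qed

theorem theorem5:
  shows "\<not> (\<exists>(G :: pb_inst \<Rightarrow> nat set) (\<alpha> :: real).
            \<alpha> > 2/3 \<and> pb_algorithm G \<and> exhaustive G \<and> strategy_proof G \<and>
            (\<forall>I. valid_inst I \<and> unit_cost I \<and> knapsack_votes I \<longrightarrow>
                 real (min_util I (G I)) \<ge> \<alpha> * real (OPT I)))"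
proof
  assume "\<exists>(G :: pb_inst \<Rightarrow> nat set) (\<alpha> :: real).
            \<alpha> > 2/3 \<and> pb_algorithm G \<and> exhaustive G \<and> strategy_proof G \<and>
            (\<forall>I. valid_inst I \<and> unit_cost I \<and> knapsack_votes I \<longrightarrow>
                 real (min_util I (G I)) \<ge> \<alpha> * real (OPT I))"
  then obtain G and \<alpha> :: real where "2/3 < \<alpha>" and alg: "pb_algorithm G"
    and sp: "strategy_proof G"
    and approx: "\<forall>I. valid_inst I \<and> unit_cost I \<and> knapsack_votes I \<longrightarrow>
                   \<alpha> * real (OPT I) \<le> real (min_util I (G I))"
    by blast
  then have "0 < \<alpha>" by linarith
  let ?I = counterexample_inst
  have "votes ?I i \<subseteq> G ?I" if i: "i \<in> {2,3}" for i
  proof (rule strategy_proof_funds_ballot[OF sp counterexample_inst(1,2)])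
    show "i \<in> {1..voters ?I}" "{i - 1} \<subseteq> projs ?I"
      using i by (auto simp: counterexample_inst_fields)
    show "votes ?I i \<subseteq> G (deviation ?I i {i - 1})"
      using counterexample_deviation_funds_ballot[OF \<open>0 < \<alpha>\<close> approx i] .
  qed
  from this[of 2] this[of 3] have "{0,1,2} \<subseteq> G ?I"
    by (auto simp: counterexample_inst_fields)
  moreover have feasible: "feasible ?I (G ?I)"
    using alg counterexample_inst(1) by (simp add: pb_algorithm_def)
  ultimately have "card {0,1,2::nat} \<le> card (G ?I)"
    by (intro card_mono) (auto simp: feasible_def counterexample_inst_fields intro: finite_subset)
  also have "\<dots> \<le> budget ?I"
    using card_le_budget_if_feasible[OF counterexample_inst(2) feasible] .
  finally show False by (simp add: counterexample_inst_fields)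
qed

end
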